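(* The set of properties consisting of $AL$ (the alternating permutations), $BR$ (the permutations beginning with a rise, i.e. with $\pi(1)<\pi(2)$), $ER$ (the permutations ending with a rise, i.e. with $\pi(n-1)<\pi(n)$ for $\pi\in S_n$), and $\{1\}$ (the set containing only the permutation of length one) is query-complete.
   Context: A permutation $\pi\in S_n$ is alternating if for every $i\in[2,n-1]$, $\pi(i)$ does not lie between $\pi(i-1)$ and $\pi(i+1)$. For $\sigma\in S_m$ and nonempty permutations $\alpha_1,\dots,\alpha_m$, the inflation $\sigma[\alpha_1,\dots,\alpha_m]$ is the permutation obtained by replacing each entry $\sigma(i)$ by an interval (contiguous positions, consecutive values) order-isomorphic to $\alpha_i$. A property is any set of permutations. A set $\mathcal{P}$ of properties is query-complete if for every permutation $\sigma\in S_m$ and every $P\in\mathcal{P}$, whether $\sigma[\alpha_1,\dots,\alpha_m]\in P$ is determined by $\sigma$ together with the knowledge, for each $i\in[m]$ and each $Q\in\mathcal{P}$, of whether $\alpha_i\in Q$. *)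

theory Defs
  imports Main
begin

text \<open>A permutation of length n is a list that is a rearrangement of [0..<n]
  (0-based values; the list at position i is pi(i+1)-1).\<close>
definition is_perm :: "nat list \<Rightarrow> bool" where
  "is_perm xs \<longleftrightarrow> distinct xs \<and> set xs = {0..<length xs}"

definition alternating :: "nat list \<Rightarrow> bool" where
  "alternating p \<longleftrightarrow> (\<forall>i. 0 < i \<and> i + 1 < length p \<longrightarrow>
      \<not> ((p!(i-1) < p!i \<and> p!i < p!(i+1)) \<or> (p!(i-1) > p!i \<and> p!i > p!(i+1))))"

definition AL :: "nat list set" where
  "AL = {p. is_perm p \<and> alternating p}"

definition BR :: "nat list set" where
  "BR = {p. is_perm p \<and> 2 \<le> length p \<and> p!0 < p!1}"

definition ER :: "nat list set" where
  "ER = {p. is_perm p \<and> 2 \<le> length p \<and> p!(length p - 2) < p!(length p - 1)}"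

definition ONE :: "nat list set" where
  "ONE = {[0]}"

definition infl_offset :: "nat list \<Rightarrow> nat list list \<Rightarrow> nat \<Rightarrow> nat" where
  "infl_offset \<sigma> as i = sum_list [length (as!j). j \<leftarrow> [0..<length \<sigma>], \<sigma>!j < \<sigma>!i]"

definition inflation :: "nat list \<Rightarrow> nat list list \<Rightarrow> nat list" where
  "inflation \<sigma> as = concat (map (\<lambda>i. map (\<lambda>x. x + infl_offset \<sigma> as i) (as!i)) [0..<length \<sigma>])"

definition query_complete :: "nat list set set \<Rightarrow> bool" where
  "query_complete \<P> \<longleftrightarrow>
     (\<forall>\<sigma> as bs. is_perm \<sigma> \<and> length as = length \<sigma> \<and> length bs = length \<sigma> \<and>
        (\<forall>i<length \<sigma>. is_perm (as!i) \<and> as!i \<noteq> [] \<and> is_perm (bs!i) \<and> bs!i \<noteq> [] \<and>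
            (\<forall>Q\<in>\<P>. as!i \<in> Q \<longleftrightarrow> bs!i \<in> Q))
      \<longrightarrow> (\<forall>P\<in>\<P>. inflation \<sigma> as \<in> P \<longleftrightarrow> inflation \<sigma> bs \<in> P))"

end

(* Read a permutation through its word of rises: position k carries p!k < p!(k+1).
   For a nonempty permutation, the four properties are determined by its profile: whether
   the rise word has no two equal neighbours (alternation), whether it is empty (length one),
   and its first and last letters. The rise word of xs @ ys is the rise word of xs, then the
   comparison last xs < hd ys, then the rise word of ys, so profiles compose along
   concatenations given the junction comparisons. In an inflation the blocks are shifted
   copies of the alpha_i (same rise words) occupying value intervals ordered like sigma,
   so every junction comparison is dictated by sigma. *)
theory Submission
  imports Defs
begin

fun rises :: "nat list \<Rightarrow> bool list" where
  "rises (a # b # r) = (a < b) # rises (b # r)"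
| "rises _ = []"

lemma length_rises: "length (rises p) = length p - 1"
  by (induction p rule: rises.induct) auto

lemma nth_rises: "Suc k < length p \<Longrightarrow> rises p ! k = (p ! k < p ! Suc k)"
proof (induction p arbitrary: k rule: rises.induct)
  case (1 a b r)
  then show ?case by (cases k) auto
qed auto

lemma rises_append:
  "xs \<noteq> [] \<Longrightarrow> ys \<noteq> [] \<Longrightarrow> rises (xs @ ys) = rises xs @ (last xs < hd ys) # rises ys"
  by (induction xs rule: rises.induct) (auto simp: neq_Nil_conv)

lemma rises_map_add: "rises (map (\<lambda>x. x + c) p) = rises p"
  by (induction p rule: rises.induct) auto

lemma alternating_iff_distinct_adj_rises:
  assumes "distinct p"
  shows "alternating p \<longleftrightarrow> distinct_adj (rises p)"
proof -
  have turn: "\<not> (a < b \<and> b < c \<or> a > b \<and> b > c) \<longleftrightarrow> (a < b) \<noteq> (b < c)"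
    if "a \<noteq> b" "b \<noteq> c" for a b c :: nat
    using that by linarith
  have "alternating p \<longleftrightarrow> (\<forall>k. Suc (Suc k) < length p \<longrightarrow>
      \<not> (p ! k < p ! Suc k \<and> p ! Suc k < p ! Suc (Suc k) \<or> p ! k > p ! Suc k \<and> p ! Suc k > p ! Suc (Suc k)))"
    unfolding alternating_def
    by (metis Suc_eq_plus1 Suc_pred' diff_Suc_1 zero_less_Suc)
  also have "\<dots> \<longleftrightarrow> (\<forall>k. Suc (Suc k) < length p \<longrightarrow> (p ! k < p ! Suc k) \<noteq> (p ! Suc k < p ! Suc (Suc k)))"
  proof (rule all_cong)
    fix k assume k: "Suc (Suc k) < length p"
    have "p ! k \<noteq> p ! Suc k" "p ! Suc k \<noteq> p ! Suc (Suc k)"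
      using assms k by (simp_all add: nth_eq_iff_index_eq)
    then show "\<not> (p ! k < p ! Suc k \<and> p ! Suc k < p ! Suc (Suc k) \<or> p ! k > p ! Suc k \<and> p ! Suc k > p ! Suc (Suc k))
        \<longleftrightarrow> (p ! k < p ! Suc k) \<noteq> (p ! Suc k < p ! Suc (Suc k))"
      by (rule turn)
  qed
  also have "\<dots> \<longleftrightarrow> distinct_adj (rises p)"
    by (simp add: distinct_adj_conv_nth length_rises nth_rises less_diff_conv)
  finally show ?thesis .
qed

(* When the rise word is empty, its hd and last are unspecified; the second component
   records this case and profile_join never looks at them then. *)
definition profile :: "nat list \<Rightarrow> bool \<times> bool \<times> bool \<times> bool" where
  "profile p = (distinct_adj (rises p), rises p = [], hd (rises p), last (rises p))"

definition profile_join ::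
  "bool \<times> bool \<times> bool \<times> bool \<Rightarrow> bool \<times> bool \<times> bool \<times> bool \<Rightarrow> bool \<Rightarrow> bool \<times> bool \<times> bool \<times> bool"
where
  "profile_join s t z = (case s of (a1, e1, h1, l1) \<Rightarrow> case t of (a2, e2, h2, l2) \<Rightarrow>
     (a1 \<and> a2 \<and> (\<not> e1 \<longrightarrow> l1 \<noteq> z) \<and> (\<not> e2 \<longrightarrow> h2 \<noteq> z), False,
      if e1 then z else h1, if e2 then z else l2))"

lemma profile_append:
  "xs \<noteq> [] \<Longrightarrow> ys \<noteq> [] \<Longrightarrow> profile (xs @ ys) = profile_join (profile xs) (profile ys) (last xs < hd ys)"
  unfolding profile_def profile_join_def
  by (auto simp: rises_append distinct_adj_append_iff distinct_adj_Cons hd_append last_append)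

lemma profile_concat_map_upt_cong:
  assumes "\<And>i. i < n \<Longrightarrow> f i \<noteq> [] \<and> g i \<noteq> [] \<and> profile (f i) = profile (g i)"
    and "\<And>i. Suc i < n \<Longrightarrow> (last (f i) < hd (f (Suc i))) = (last (g i) < hd (g (Suc i)))"
  shows "profile (concat (map f [0..<n])) = profile (concat (map g [0..<n]))"
  using assms
proof (induction n)
  case (Suc n)
  show ?case
  proof (cases n)
    case 0
    with Suc.prems(1)[of 0] show ?thesis by simp
  next
    case (Suc m)
    have split: "profile (concat (map h [0..<n]) @ h n) =
        profile_join (profile (concat (map h [0..<n]))) (profile (h n)) (last (h m) < hd (h n))"
      if "h m \<noteq> []" "h n \<noteq> []" for h :: "nat \<Rightarrow> nat list"
      using that profile_append[of "concat (map h [0..<n])" "h n"] by (simp add: Suc)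
    have "profile (concat (map f [0..<n])) = profile (concat (map g [0..<n]))"
      using Suc.prems by (intro Suc.IH) auto
    moreover have "f m \<noteq> []" "f n \<noteq> []" "g m \<noteq> []" "g n \<noteq> []" "profile (f n) = profile (g n)"
      using Suc.prems(1) by (auto simp: Suc)
    moreover have "(last (f m) < hd (f n)) = (last (g m) < hd (g n))"
      using Suc.prems(2)[of m] by (simp add: Suc)
    ultimately show ?thesis
      by (simp add: split)
  qed
qed simp

lemma rises_eq_Nil_iff: "rises p = [] \<longleftrightarrow> length p \<le> 1"
  using length_rises[of p] by auto

lemma hd_rises: "2 \<le> length p \<Longrightarrow> hd (rises p) = (p ! 0 < p ! 1)"
  using nth_rises[of 0 p] by (simp add: hd_conv_nth rises_eq_Nil_iff)

lemma last_rises: "2 \<le> length p \<Longrightarrow> last (rises p) = (p ! (length p - 2) < p ! (length p - 1))"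
  using nth_rises[of "length p - 2" p]
  by (simp add: last_conv_nth rises_eq_Nil_iff length_rises numeral_2_eq_2 Suc_diff_Suc)

lemma mem_AL_iff: "is_perm p \<Longrightarrow> p \<in> AL \<longleftrightarrow> distinct_adj (rises p)"
  by (simp add: AL_def is_perm_def alternating_iff_distinct_adj_rises)

lemma mem_BR_iff: "p \<in> BR \<longleftrightarrow> is_perm p \<and> rises p \<noteq> [] \<and> hd (rises p)"
  by (auto simp: BR_def rises_eq_Nil_iff hd_rises)

lemma mem_ER_iff: "p \<in> ER \<longleftrightarrow> is_perm p \<and> rises p \<noteq> [] \<and> last (rises p)"
  by (auto simp: ER_def rises_eq_Nil_iff last_rises)

lemma mem_ONE_iff: "is_perm p \<Longrightarrow> p \<noteq> [] \<Longrightarrow> p \<in> ONE \<longleftrightarrow> rises p = []"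
  by (auto simp: ONE_def is_perm_def rises_eq_Nil_iff le_Suc_eq length_Suc_conv)

lemma same_properties_iff_profile_eq:
  assumes "is_perm p" "p \<noteq> []" "is_perm q" "q \<noteq> []"
  shows "(\<forall>Q\<in>{AL, BR, ER, ONE}. p \<in> Q \<longleftrightarrow> q \<in> Q) \<longleftrightarrow> profile p = profile q"
  using assms by (auto simp: profile_def mem_AL_iff mem_BR_iff mem_ER_iff mem_ONE_iff)

lemma is_permI: "distinct p \<Longrightarrow> set p \<subseteq> {0..<length p} \<Longrightarrow> is_perm p"
  unfolding is_perm_def by (simp add: card_subset_eq distinct_card)

lemma distinct_concat_map:
  assumes "distinct xs" "\<And>x. x \<in> set xs \<Longrightarrow> distinct (f x)"
    and "\<And>x y. x \<in> set xs \<Longrightarrow> y \<in> set xs \<Longrightarrow> x \<noteq> y \<Longrightarrow> set (f x) \<inter> set (f y) = {}"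
  shows "distinct (concat (map f xs))"
  using assms by (induction xs) auto

definition infl_block :: "nat list \<Rightarrow> nat list list \<Rightarrow> nat \<Rightarrow> nat list" where
  "infl_block \<sigma> as i = map (\<lambda>x. x + infl_offset \<sigma> as i) (as ! i)"

lemma inflation_eq_concat_blocks: "inflation \<sigma> as = concat (map (infl_block \<sigma> as) [0..<length \<sigma>])"
  unfolding inflation_def infl_block_def ..

lemma length_inflation: "length (inflation \<sigma> as) = (\<Sum>k<length \<sigma>. length (as ! k))"
  by (simp add: inflation_def length_concat comp_def sum_list_sum_nth atLeast0LessThan)

lemma infl_offset_eq_sum:
  "infl_offset \<sigma> as i = (\<Sum>k\<in>{k. k < length \<sigma> \<and> \<sigma> ! k < \<sigma> ! i}. length (as ! k))"
proof -
  have comprehension: "[f j. j \<leftarrow> xs, P j] = map f (filter P xs)" for f P and xs :: "nat list"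
    by (induction xs) auto
  have "{k. k < length \<sigma> \<and> \<sigma> ! k < \<sigma> ! i} = set (filter (\<lambda>k. \<sigma> ! k < \<sigma> ! i) [0..<length \<sigma>])"
    by auto
  then show ?thesis
    unfolding infl_offset_def comprehension by (simp add: sum_list_distinct_conv_sum_set)
qed

lemma infl_offset_add_length_le:
  assumes "finite B" "i \<in> B" "{k. k < length \<sigma> \<and> \<sigma> ! k < \<sigma> ! i} \<subseteq> B"
  shows "infl_offset \<sigma> as i + length (as ! i) \<le> (\<Sum>k\<in>B. length (as ! k))"
proof -
  have "infl_offset \<sigma> as i + length (as ! i) =
      (\<Sum>k\<in>insert i {k. k < length \<sigma> \<and> \<sigma> ! k < \<sigma> ! i}. length (as ! k))"
    by (simp add: infl_offset_eq_sum)
  also have "\<dots> \<le> (\<Sum>k\<in>B. length (as ! k))"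
    using assms by (intro sum_mono2) auto
  finally show ?thesis .
qed

lemma set_infl_block:
  "is_perm (as ! i) \<Longrightarrow>
   set (infl_block \<sigma> as i) = {infl_offset \<sigma> as i..<infl_offset \<sigma> as i + length (as ! i)}"
  by (auto simp: infl_block_def is_perm_def image_add_atLeastLessThan' add.commute)

lemma infl_block_values_less:
  assumes "i < length \<sigma>" "\<sigma> ! i < \<sigma> ! j" "is_perm (as ! i)" "is_perm (as ! j)"
    and "x \<in> set (infl_block \<sigma> as i)" "y \<in> set (infl_block \<sigma> as j)"
  shows "x < y"
proof -
  have "infl_offset \<sigma> as i + length (as ! i) \<le> infl_offset \<sigma> as j"
    unfolding infl_offset_eq_sum[of \<sigma> as j]
    using assms(1,2) by (intro infl_offset_add_length_le) auto
  then show ?thesis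
    using assms(3-) by (auto simp: set_infl_block)
qed

lemma infl_block_values_less_iff:
  assumes "is_perm \<sigma>" "i < length \<sigma>" "j < length \<sigma>" "i \<noteq> j" "is_perm (as ! i)" "is_perm (as ! j)"
    and "x \<in> set (infl_block \<sigma> as i)" "y \<in> set (infl_block \<sigma> as j)"
  shows "x < y \<longleftrightarrow> \<sigma> ! i < \<sigma> ! j"
proof -
  have "\<sigma> ! i \<noteq> \<sigma> ! j"
    using assms(1-4) by (simp add: is_perm_def nth_eq_iff_index_eq)
  then show ?thesis
    using infl_block_values_less[of i \<sigma> j as x y] infl_block_values_less[of j \<sigma> i as y x] assms
    by (meson linorder_neqE_nat order.asym)
qed

lemma is_perm_inflation:
  assumes "is_perm \<sigma>" "\<And>i. i < length \<sigma> \<Longrightarrow> is_perm (as ! i)"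
  shows "is_perm (inflation \<sigma> as)"
proof (rule is_permI)
  show "distinct (inflation \<sigma> as)"
    unfolding inflation_eq_concat_blocks
  proof (rule distinct_concat_map)
    fix i assume "i \<in> set [0..<length \<sigma>]"
    then show "distinct (infl_block \<sigma> as i)"
      using assms(2) by (simp add: infl_block_def is_perm_def distinct_map)
  next
    fix i j assume ij: "i \<in> set [0..<length \<sigma>]" "j \<in> set [0..<length \<sigma>]" "i \<noteq> j"
    show "set (infl_block \<sigma> as i) \<inter> set (infl_block \<sigma> as j) = {}"
    proof (rule Int_emptyI)
      fix x assume "x \<in> set (infl_block \<sigma> as i)" "x \<in> set (infl_block \<sigma> as j)"
      then have "\<not> \<sigma> ! i < \<sigma> ! j" "\<not> \<sigma> ! j < \<sigma> ! i"
        using infl_block_values_less_iff[of \<sigma> i j as x x] infl_block_values_less_iff[of \<sigma> j i as x x]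
          assms ij by auto
      then show False
        using assms(1) ij by (simp add: is_perm_def nth_eq_iff_index_eq)
    qed
  qed simp
next
  show "set (inflation \<sigma> as) \<subseteq> {0..<length (inflation \<sigma> as)}"
  proof
    fix x assume "x \<in> set (inflation \<sigma> as)"
    then obtain i where i: "i < length \<sigma>" and x: "x \<in> set (infl_block \<sigma> as i)"
      by (auto simp: inflation_eq_concat_blocks)
    have "x < infl_offset \<sigma> as i + length (as ! i)"
      using x assms(2)[OF i] by (simp add: set_infl_block)
    also have "\<dots> \<le> length (inflation \<sigma> as)"
      unfolding length_inflation using i by (intro infl_offset_add_length_le) auto
    finally show "x \<in> {0..<length (inflation \<sigma> as)}" by simp
  qed
qed

lemma infl_block_junction:
  assumes "is_perm \<sigma>" "Suc i < length \<sigma>"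
    and "is_perm (as ! i)" "as ! i \<noteq> []" "is_perm (as ! Suc i)" "as ! Suc i \<noteq> []"
  shows "last (infl_block \<sigma> as i) < hd (infl_block \<sigma> as (Suc i)) \<longleftrightarrow> \<sigma> ! i < \<sigma> ! Suc i"
proof -
  have "infl_block \<sigma> as i \<noteq> []" "infl_block \<sigma> as (Suc i) \<noteq> []"
    using assms(4,6) by (simp_all add: infl_block_def)
  then show ?thesis
    using assms by (intro infl_block_values_less_iff) auto
qed

lemma profile_infl_block: "profile (infl_block \<sigma> as i) = profile (as ! i)"
  by (simp add: profile_def infl_block_def rises_map_add)

lemma profile_inflation_cong:
  assumes "is_perm \<sigma>"
    and "\<And>i. i < length \<sigma> \<Longrightarrow> is_perm (as ! i) \<and> as ! i \<noteq> []"
    and "\<And>i. i < length \<sigma> \<Longrightarrow> is_perm (bs ! i) \<and> bs ! i \<noteq> []"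
    and "\<And>i. i < length \<sigma> \<Longrightarrow> profile (as ! i) = profile (bs ! i)"
  shows "profile (inflation \<sigma> as) = profile (inflation \<sigma> bs)"
  unfolding inflation_eq_concat_blocks
proof (rule profile_concat_map_upt_cong)
  fix i assume "i < length \<sigma>"
  then show "infl_block \<sigma> as i \<noteq> [] \<and> infl_block \<sigma> bs i \<noteq> [] \<and>
      profile (infl_block \<sigma> as i) = profile (infl_block \<sigma> bs i)"
    using assms(2-4) unfolding profile_infl_block by (simp add: infl_block_def)
next
  fix i assume "Suc i < length \<sigma>"
  then show "(last (infl_block \<sigma> as i) < hd (infl_block \<sigma> as (Suc i))) =
      (last (infl_block \<sigma> bs i) < hd (infl_block \<sigma> bs (Suc i)))"
    using assms(1-3) by (simp add: infl_block_junction)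
qed

lemma inflation_eq_Nil_iff:
  "(\<And>i. i < length \<sigma> \<Longrightarrow> as ! i \<noteq> []) \<Longrightarrow> inflation \<sigma> as = [] \<longleftrightarrow> \<sigma> = []"
  by (auto simp: inflation_eq_concat_blocks infl_block_def)

theorem lemma4p2:
  shows "query_complete {AL, BR, ER, ONE}"
  unfolding query_complete_def
proof (intro allI impI)
  fix \<sigma> as bs
  assume "is_perm \<sigma> \<and> length as = length \<sigma> \<and> length bs = length \<sigma> \<and>
    (\<forall>i<length \<sigma>. is_perm (as ! i) \<and> as ! i \<noteq> [] \<and> is_perm (bs ! i) \<and> bs ! i \<noteq> [] \<and>
      (\<forall>Q\<in>{AL, BR, ER, ONE}. as ! i \<in> Q \<longleftrightarrow> bs ! i \<in> Q))"
  then have \<sigma>: "is_perm \<sigma>"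
    and as: "\<And>i. i < length \<sigma> \<Longrightarrow> is_perm (as ! i) \<and> as ! i \<noteq> []"
    and bs: "\<And>i. i < length \<sigma> \<Longrightarrow> is_perm (bs ! i) \<and> bs ! i \<noteq> []"
    and profiles: "\<And>i. i < length \<sigma> \<Longrightarrow> profile (as ! i) = profile (bs ! i)"
    using same_properties_iff_profile_eq by auto
  show "\<forall>P\<in>{AL, BR, ER, ONE}. inflation \<sigma> as \<in> P \<longleftrightarrow> inflation \<sigma> bs \<in> P"
  proof (cases "\<sigma> = []")
    case True
    then show ?thesis by (simp add: inflation_def)
  next
    case False
    show ?thesis
    proof (rule same_properties_iff_profile_eq[THEN iffD2])
      show "inflation \<sigma> as \<noteq> []" "inflation \<sigma> bs \<noteq> []"
        using False inflation_eq_Nil_iff as bs by simp_all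
      show "is_perm (inflation \<sigma> as)" "is_perm (inflation \<sigma> bs)"
        using \<sigma> as bs by (simp_all add: is_perm_inflation)
      show "profile (inflation \<sigma> as) = profile (inflation \<sigma> bs)"
        using \<sigma> as bs profiles by (rule profile_inflation_cong)
    qed
  qed
qed

end
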